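(* For every positive integer $n$, $$(2x+1)\sum_{k=1}^nk(k+1)(2k+1)(-1)^{n-k}w_k(x)^2=n(n+1)(n+2)w_n(x)w_{n+1}(x),$$ where $w_m(x)=\sum_{k=1}^m w(m,k)x^{k-1}$ with $w(m,k)=\frac1k\binom{m-1}{k-1}\binom{m+k}{k-1}$.
   Context: The identity is an identity of polynomials in $x$. *)

theory Defs
  imports "HOL-Computational_Algebra.Polynomial"
begin

definition wcoef :: "nat \<Rightarrow> nat \<Rightarrow> rat" where
  "wcoef m k = (1 / of_nat k) * of_nat ((m - 1) choose (k - 1)) * of_nat ((m + k) choose (k - 1))"

definition wpoly :: "nat \<Rightarrow> rat poly" where
  "wpoly m = (\<Sum>k = 1..m. monom (wcoef m k) (k - 1))"

end

theory Submission
  imports Defs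
begin

(* The polynomials w_n satisfy the three-term recurrence
     (n + 2) w_(n+1) = (2n + 1)(1 + 2x) w_n - (n - 1) w_(n-1).
   Coefficientwise this is a polynomial identity in n: multiplied by (j+1)! j!, the coefficient of
   x^j in w_m is the product of the falling factorials (m - 1)^(j) and (m + j + 1)^(j).
   Multiplying the recurrence by n (n + 1) w_n shows that (1 + 2x) n (n + 1)(2n + 1) w_n^2 is the sum
   of consecutive terms of the sequence n (n + 1)(n + 2) w_n w_(n+1), so the alternating sum
   telescopes. *)

definition falling :: "'a::comm_ring_1 \<Rightarrow> nat \<Rightarrow> 'a" where
  "falling a j = (\<Prod>i<j. a - of_nat i)"

lemma falling_0 [simp]: "falling a 0 = 1"
  by (simp add: falling_def)

lemma falling_Suc: "falling a (Suc j) = falling a j * (a - of_nat j)"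
  by (simp add: falling_def)

lemma falling_Suc_left: "falling a (Suc j) = a * falling (a - 1) j"
  unfolding falling_def by (subst prod.lessThan_Suc_shift) (simp add: algebra_simps)

lemma of_nat_choose_mult_fact:
  "of_nat (N choose j) * fact j = (falling (of_nat N) j :: 'a::field_char_0)"
  by (simp add: binomial_gbinomial gbinomial_mult_fact' falling_def atLeast0LessThan)

(* For m \<ge> 1 this is (j + 1)! j! * wcoef m (j + 1), with m replaced by an indeterminate x. *)
definition scaled_wcoef :: "'a::comm_ring_1 \<Rightarrow> nat \<Rightarrow> 'a" where
  "scaled_wcoef x j = falling (x - 1) j * falling (x + of_nat j + 1) j"

lemma wcoef_Suc:
  assumes "m \<ge> 1"
  shows "wcoef m (Suc j) = scaled_wcoef (of_nat m) j / (fact (Suc j) * fact j)"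
proof -
  have "wcoef m (Suc j) * (fact (Suc j) * fact j)
      = (of_nat ((m - 1) choose j) * fact j) * (of_nat ((m + Suc j) choose j) * fact j)"
    unfolding wcoef_def by (simp add: field_simps)
  also have "\<dots> = scaled_wcoef (of_nat m) j"
    using assms unfolding of_nat_choose_mult_fact scaled_wcoef_def by (simp add: add_ac)
  finally show ?thesis
    by (simp add: eq_divide_eq)
qed

lemma coeff_wpoly:
  assumes "m \<ge> 1"
  shows "coeff (wpoly m) j = scaled_wcoef (of_nat m) j / (fact (Suc j) * fact j)"
proof -
  have "coeff (wpoly m) j = (\<Sum>k = 1..m. if k = Suc j then wcoef m k else 0)"
    unfolding wpoly_def coeff_sum coeff_monom by (rule sum.cong) auto
  also have "\<dots> = wcoef m (Suc j)"
    using assms by (auto simp: wcoef_def)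
  finally show ?thesis
    using wcoef_Suc[OF assms] by simp
qed

lemma scaled_wcoef_recurrence:
  fixes x :: "'a::comm_ring_1"
  shows "(2 * x + 1)
      * (scaled_wcoef x (Suc i) + 2 * (of_nat i + 1) * (of_nat i + 2) * scaled_wcoef x i)
    = (x + 2) * scaled_wcoef (x + 1) (Suc i) + (x - 1) * scaled_wcoef (x - 1) (Suc i)"
proof -
  define A where "A = falling (x - 1) i"
  define B where "B = falling (x + of_nat i + 1) i"
  define U where "U = falling (x + of_nat i + 2) i"
  define V where "V = falling (x - 2) (Suc i)"
  have "scaled_wcoef x (Suc i) = falling (x - 1) (Suc i) * falling (x + of_nat i + 2) (Suc i)"
    by (simp add: scaled_wcoef_def add_ac)
  also have "\<dots> = A * (x - 1 - of_nat i) * ((x + of_nat i + 2) * B)"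
    unfolding A_def B_def falling_Suc[of "x - 1"] falling_Suc_left[of "x + of_nat i + 2"]
    by (simp add: algebra_simps)
  finally have scaled_wcoef_Suc:
    "scaled_wcoef x (Suc i) = A * (x - 1 - of_nat i) * ((x + of_nat i + 2) * B)" .
  have scaled_wcoef_up: "scaled_wcoef (x + 1) (Suc i) = x * A * ((x + of_nat i + 3) * U)"
    unfolding scaled_wcoef_def A_def U_def falling_Suc_left by (simp add: algebra_simps)
  have scaled_wcoef_down: "scaled_wcoef (x - 1) (Suc i) = V * (B * (x + 1))"
    unfolding scaled_wcoef_def V_def B_def falling_Suc by (simp add: algebra_simps)
  have U_B: "(x + 2) * U = (x + of_nat i + 2) * B"
    using falling_Suc[of "x + of_nat i + 2" i] falling_Suc_left[of "x + of_nat i + 2" i]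
    unfolding U_def B_def by (simp add: algebra_simps)
  have V_A: "(x - 1) * V = A * (x - 1 - of_nat i) * (x - 2 - of_nat i)"
    using falling_Suc_left[of "x - 1" "Suc i"] falling_Suc[of "x - 1" "Suc i"]
    unfolding A_def V_def falling_Suc by (simp add: algebra_simps)
  have "(2 * x + 1)
      * (scaled_wcoef x (Suc i) + 2 * (of_nat i + 1) * (of_nat i + 2) * scaled_wcoef x i)
      = (2 * x + 1) * (A * (x - 1 - of_nat i) * ((x + of_nat i + 2) * B)
          + 2 * (of_nat i + 1) * (of_nat i + 2) * (A * B))"
    unfolding scaled_wcoef_Suc by (simp add: scaled_wcoef_def A_def B_def)
  also have "\<dots> = x * A * (x + of_nat i + 3) * ((x + of_nat i + 2) * B)
      + A * (x - 1 - of_nat i) * (x - 2 - of_nat i) * (B * (x + 1))"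
    by (simp add: algebra_simps)
  also have "\<dots> = x * A * (x + of_nat i + 3) * ((x + 2) * U) + (x - 1) * V * (B * (x + 1))"
    by (simp only: U_B V_A)
  also have "\<dots> = (x + 2) * scaled_wcoef (x + 1) (Suc i) + (x - 1) * scaled_wcoef (x - 1) (Suc i)"
    unfolding scaled_wcoef_up scaled_wcoef_down by (simp add: algebra_simps)
  finally show ?thesis .
qed

lemma wpoly_recurrence:
  "[:1, 2:] * smult (2 * of_nat n + 3) (wpoly (Suc n))
    = smult (of_nat n + 3) (wpoly (Suc (Suc n))) + smult (of_nat n) (wpoly n)"
proof (rule poly_eqI)
  fix j
  define y :: rat where "y = of_nat n"
  define F :: "nat \<Rightarrow> rat" where "F k = fact (Suc k) * fact k" for k
  have coeff_Suc: "coeff (wpoly (Suc n)) k = scaled_wcoef (y + 1) k / F k"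
      and coeff_Suc_Suc: "coeff (wpoly (Suc (Suc n))) k = scaled_wcoef (y + 2) k / F k" for k
    by (simp_all add: coeff_wpoly y_def F_def add_ac)
  have coeff_n: "y * coeff (wpoly n) k = y * (scaled_wcoef y k / F k)" for k
    by (cases n) (simp_all add: coeff_wpoly y_def F_def)
  have "coeff ([:1, 2:] * smult (2 * y + 3) (wpoly (Suc n))) j
      = coeff (smult (y + 3) (wpoly (Suc (Suc n))) + smult y (wpoly n)) j"
  proof (cases j)
    case 0
    then show ?thesis
      by (simp add: coeff_Suc coeff_Suc_Suc coeff_n scaled_wcoef_def F_def)
  next
    case (Suc i)
    have F_Suc: "F (Suc i) = (of_nat i + 1) * (of_nat i + 2) * F i"
      by (simp add: F_def algebra_simps)
    have lower_term: "scaled_wcoef (y + 1) i / F i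
        = (of_nat i + 1) * (of_nat i + 2) * scaled_wcoef (y + 1) i / F (Suc i)"
      unfolding F_Suc by (rule mult_divide_mult_cancel_left[symmetric]) simp
    have "coeff ([:1, 2:] * smult (2 * y + 3) (wpoly (Suc n))) j
        = (2 * y + 3)
          * (scaled_wcoef (y + 1) (Suc i) / F (Suc i) + 2 * (scaled_wcoef (y + 1) i / F i))"
      unfolding Suc by (simp add: coeff_Suc algebra_simps)
    also have "\<dots> = (2 * (y + 1) + 1) * (scaled_wcoef (y + 1) (Suc i)
        + 2 * (of_nat i + 1) * (of_nat i + 2) * scaled_wcoef (y + 1) i) / F (Suc i)"
      unfolding lower_term by (simp add: add_divide_distrib algebra_simps)
    also have "\<dots> = ((y + 3) * scaled_wcoef (y + 2) (Suc i) + y * scaled_wcoef y (Suc i)) / F (Suc i)"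
      unfolding scaled_wcoef_recurrence by (simp add: algebra_simps)
    also have "\<dots> = coeff (smult (y + 3) (wpoly (Suc (Suc n))) + smult y (wpoly n)) j"
      unfolding Suc using coeff_n[of "Suc i"] by (simp add: coeff_Suc_Suc add_divide_distrib)
    finally show ?thesis .
  qed
  then show "coeff ([:1, 2:] * smult (2 * of_nat n + 3) (wpoly (Suc n))) j
      = coeff (smult (of_nat n + 3) (wpoly (Suc (Suc n))) + smult (of_nat n) (wpoly n)) j"
    by (simp add: y_def)
qed

lemma sum_alternating_Suc:
  fixes c :: "nat \<Rightarrow> 'a::comm_ring_1" and p :: "nat \<Rightarrow> 'a poly"
  shows "(\<Sum>k = 1..Suc n. smult (c k * (- 1) ^ (Suc n - k)) (p k))
    = smult (c (Suc n)) (p (Suc n)) - (\<Sum>k = 1..n. smult (c k * (- 1) ^ (n - k)) (p k))"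
proof -
  have "(\<Sum>k = 1..n. smult (c k * (- 1) ^ (Suc n - k)) (p k))
      = - (\<Sum>k = 1..n. smult (c k * (- 1) ^ (n - k)) (p k))"
    by (simp add: sum_negf[symmetric] Suc_diff_le)
  then show ?thesis
    by simp
qed

lemma wpoly_square_step:
  "[:1, 2:] * smult (of_nat (Suc n * (Suc n + 1) * (2 * Suc n + 1))) ((wpoly (Suc n))\<^sup>2)
    = smult (of_nat (Suc n * (Suc n + 1) * (Suc n + 2))) (wpoly (Suc n) * wpoly (Suc (Suc n)))
      + smult (of_nat (n * (n + 1) * (n + 2))) (wpoly n * wpoly (Suc n))"
proof -
  let ?w = "wpoly (Suc n)"
  have "[:1, 2:] * smult (of_nat (Suc n * (Suc n + 1) * (2 * Suc n + 1))) (?w\<^sup>2)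
      = smult ((of_nat n + 1) * (of_nat n + 2)) (?w * ([:1, 2:] * smult (2 * of_nat n + 3) ?w))"
    by (simp add: power2_eq_square algebra_simps)
  also have "\<dots> = smult ((of_nat n + 1) * (of_nat n + 2))
      (?w * (smult (of_nat n + 3) (wpoly (Suc (Suc n))) + smult (of_nat n) (wpoly n)))"
    by (simp only: wpoly_recurrence)
  also have "\<dots> = smult (of_nat (Suc n * (Suc n + 1) * (Suc n + 2))) (?w * wpoly (Suc (Suc n)))
      + smult (of_nat (n * (n + 1) * (n + 2))) (wpoly n * ?w)"
    by (simp add: smult_add_right algebra_simps)
  finally show ?thesis .
qed

theorem lemma4p6:
  fixes n :: nat
  assumes "n \<ge> 1"
  shows "[:1, 2:] * (\<Sum>k = 1..n. smult (of_nat (k * (k + 1) * (2 * k + 1)) * (- 1) ^ (n - k)) ((wpoly k)\<^sup>2))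
         = smult (of_nat (n * (n + 1) * (n + 2))) (wpoly n * wpoly (Suc n))"
proof (induction n)
  case 0
  show ?case by simp
next
  case (Suc n)
  let ?c = "\<lambda>k. of_nat (k * (k + 1) * (2 * k + 1)) :: rat"
  have "[:1, 2:] * (\<Sum>k = 1..Suc n. smult (?c k * (- 1) ^ (Suc n - k)) ((wpoly k)\<^sup>2))
      = [:1, 2:] * smult (?c (Suc n)) ((wpoly (Suc n))\<^sup>2)
        - [:1, 2:] * (\<Sum>k = 1..n. smult (?c k * (- 1) ^ (n - k)) ((wpoly k)\<^sup>2))"
    by (simp only: sum_alternating_Suc right_diff_distrib)
  then show ?case
    by (simp only: Suc.IH wpoly_square_step add_diff_cancel_right)
qed

end
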